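(* Let $q\ge2$ and let $f\colon\mathbb{N}_0\to\mathbb{U}$ be a $q$-multiplicative sequence such that for every $\alpha\in\mathbb{R}$, $$\frac1N\sum_{n=0}^{N-1}f(n)e(n\alpha)\to0\quad\text{as }N\to\infty.$$ Then the convergence is uniform in $\alpha$: $$\sup_{\alpha\in\mathbb{R}}\Big|\frac1N\sum_{n=0}^{N-1}f(n)e(n\alpha)\Big|\to0\quad\text{as }N\to\infty.$$
   Context: $\mathbb{N}_0=\{0,1,2,\dots\}$, $\mathbb{U}=\{z\in\mathbb{C}:|z|=1\}$, $e(t)=e^{2\pi i t}$. A sequence $f\colon\mathbb{N}_0\to\mathbb{U}$ is $q$-multiplicative if for all integers $t,m,n\ge 0$ with $m<q^t$ and $q^t\mid n$ one has $f(m+n)=f(m)f(n)$. *)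

theory Defs
  imports "HOL-Analysis.Analysis"
begin

definition e :: "real \<Rightarrow> complex" where
  "e t = exp (2 * complex_of_real pi * \<i> * complex_of_real t)"

definition q_multiplicative :: "nat \<Rightarrow> (nat \<Rightarrow> complex) \<Rightarrow> bool" where
  "q_multiplicative q f \<longleftrightarrow>
     (\<forall>n. norm (f n) = 1) \<and>
     (\<forall>t m n. m < q ^ t \<and> q ^ t dvd n \<longrightarrow> f (m + n) = f m * f n)"

definition exp_avg :: "(nat \<Rightarrow> complex) \<Rightarrow> real \<Rightarrow> nat \<Rightarrow> complex" where
  "exp_avg f \<alpha> N = (1 / of_nat N) * (\<Sum>n<N. f n * e (real n * \<alpha>))"

end

theory Submission
  imports Defs
begin

text \<open>Write \<open>S(N)\<close> for the exponential sum of length \<open>N\<close> and let \<open>Q = q\<^sup>K\<close>. Multiplicativity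
  across the block boundary \<open>aQ\<close> gives \<open>S(aQ + r) = S(aQ) + f(aQ) e(aQ\<alpha>) S(r)\<close> for \<open>r \<le> Q\<close>, hence
  \<open>|S(aQ)| \<le> a |S(Q)|\<close>. Consequently the averages of length \<open>q\<^sup>k\<close> decrease in \<open>k\<close> for every \<open>\<alpha>\<close>;
  as they are continuous and 1-periodic in \<open>\<alpha>\<close> and tend to 0 pointwise, Dini's compactness
  argument on \<open>[0, 1]\<close> makes them uniformly small at a single power \<open>Q\<close>. Writing an arbitrary
  \<open>N\<close> as \<open>aQ + r\<close> then bounds the average of length \<open>N\<close> by the one of length \<open>Q\<close> plus \<open>Q / N\<close>.\<close>

lemma e_add: "e (x + y) = e x * e y"
  unfolding e_def by (simp add: ring_distribs exp_add)

lemma norm_e [simp]: "norm (e x) = 1"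
  unfolding e_def by (simp add: norm_exp_eq_Re)

lemma e_of_int [simp]: "e (of_int k) = 1"
proof -
  have "e (of_int k) = cis (2 * pi * of_int k)"
    unfolding e_def cis_conv_exp by (simp add: mult_ac)
  then show ?thesis
    by (simp add: cis.ctr cos_int_2pin sin_int_2pin complex_eq_iff)
qed

lemma continuous_on_norm_exp_avg: "continuous_on A (\<lambda>\<alpha>. norm (exp_avg f \<alpha> N))"
  unfolding exp_avg_def e_def by (intro continuous_intros)

lemma exp_avg_frac: "exp_avg f (frac \<alpha>) N = exp_avg f \<alpha> N"
proof -
  have "e (real n * \<alpha>) = e (real n * frac \<alpha>)" for n
  proof -
    have "real n * \<alpha> = real n * frac \<alpha> + of_int (int n * \<lfloor>\<alpha>\<rfloor>)"
      by (simp add: frac_def algebra_simps)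
    then show ?thesis
      by (metis e_add e_of_int mult_1_right)
  qed
  then show ?thesis
    unfolding exp_avg_def by simp
qed

definition exp_sum :: "(nat \<Rightarrow> complex) \<Rightarrow> real \<Rightarrow> nat \<Rightarrow> complex" where
  "exp_sum f \<alpha> N = (\<Sum>n<N. f n * e (real n * \<alpha>))"

lemma exp_avg_eq_exp_sum: "exp_avg f \<alpha> N = exp_sum f \<alpha> N / of_nat N"
  unfolding exp_avg_def exp_sum_def by simp

lemma norm_exp_sum_le:
  assumes "\<And>n. norm (f n) \<le> 1"
  shows "norm (exp_sum f \<alpha> N) \<le> real N"
proof -
  have "norm (exp_sum f \<alpha> N) \<le> (\<Sum>n<N. norm (f n * e (real n * \<alpha>)))"
    unfolding exp_sum_def by (rule norm_sum)
  also have "\<dots> \<le> (\<Sum>n<N. 1)"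
    by (intro sum_mono) (simp add: norm_mult assms)
  finally show ?thesis
    by simp
qed

lemma q_multiplicative_norm: "q_multiplicative q f \<Longrightarrow> norm (f n) = 1"
  unfolding q_multiplicative_def by blast

lemma q_multiplicative_block:
  assumes "q_multiplicative q f" and "m < q ^ K"
  shows "f (a * q ^ K + m) = f (a * q ^ K) * f m"
  using assms unfolding q_multiplicative_def
  by (metis add.commute dvd_triv_right mult.commute)

lemma exp_sum_block_split:
  fixes a K :: nat
  assumes "q_multiplicative q f" and "r \<le> q ^ K"
  defines "M \<equiv> a * q ^ K"
  shows "exp_sum f \<alpha> (M + r) = exp_sum f \<alpha> M + f M * e (real M * \<alpha>) * exp_sum f \<alpha> r"
proof -
  have "(\<Sum>n<M + r. g n) = (\<Sum>n<M. g n) + (\<Sum>m<r. g (M + m))" for g :: "nat \<Rightarrow> complex"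
    by (induction r) (simp_all add: add.assoc)
  then have "exp_sum f \<alpha> (M + r) = exp_sum f \<alpha> M + (\<Sum>m<r. f (M + m) * e (real (M + m) * \<alpha>))"
    unfolding exp_sum_def .
  also have "(\<Sum>m<r. f (M + m) * e (real (M + m) * \<alpha>)) = f M * e (real M * \<alpha>) * exp_sum f \<alpha> r"
  proof -
    have "f (M + m) * e (real (M + m) * \<alpha>) = f M * e (real M * \<alpha>) * (f m * e (real m * \<alpha>))"
      if "m < r" for m
      using q_multiplicative_block[OF assms(1), of m K a] that assms(2)
      unfolding M_def of_nat_add distrib_right e_add by simp
    then show ?thesis
      by (simp add: exp_sum_def sum_distrib_left)
  qed
  finally show ?thesis .
qed

lemma norm_exp_sum_block_split_le:
  assumes "q_multiplicative q f" and "r \<le> q ^ K"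
  shows "norm (exp_sum f \<alpha> (a * q ^ K + r))
    \<le> norm (exp_sum f \<alpha> (a * q ^ K)) + norm (exp_sum f \<alpha> r)"
  using exp_sum_block_split[OF assms, where a = a and \<alpha> = \<alpha>]
  by (metis norm_triangle_ineq norm_mult norm_e q_multiplicative_norm[OF assms(1)] mult_1_left)

lemma norm_exp_sum_block_le:
  assumes "q_multiplicative q f"
  shows "norm (exp_sum f \<alpha> (a * q ^ K)) \<le> real a * norm (exp_sum f \<alpha> (q ^ K))"
proof (induction a)
  case 0
  then show ?case
    by (simp add: exp_sum_def)
next
  case (Suc a)
  have "norm (exp_sum f \<alpha> (Suc a * q ^ K))
      \<le> norm (exp_sum f \<alpha> (a * q ^ K)) + norm (exp_sum f \<alpha> (q ^ K))"
    using norm_exp_sum_block_split_le[OF assms order_refl, where a = a and K = K and \<alpha> = \<alpha>]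
    by (simp add: add.commute)
  then show ?case
    using Suc by (simp add: algebra_simps)
qed

lemma norm_exp_avg_power_antimono:
  assumes "q_multiplicative q f" and "q > 0" and "k \<le> K"
  shows "norm (exp_avg f \<alpha> (q ^ K)) \<le> norm (exp_avg f \<alpha> (q ^ k))"
proof -
  have K: "q ^ K = q ^ (K - k) * q ^ k"
    using assms(3) by (simp flip: power_add)
  have "norm (exp_sum f \<alpha> (q ^ K)) \<le> real (q ^ (K - k)) * norm (exp_sum f \<alpha> (q ^ k))"
    unfolding K by (rule norm_exp_sum_block_le[OF assms(1)])
  then have "norm (exp_sum f \<alpha> (q ^ K)) / real (q ^ K) \<le> norm (exp_sum f \<alpha> (q ^ k)) / real (q ^ k)"
    using assms(2) unfolding K of_nat_mult by (simp add: field_simps)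
  then show ?thesis
    by (simp add: exp_avg_eq_exp_sum norm_divide norm_power)
qed

lemma norm_exp_avg_le_power_avg:
  assumes "q_multiplicative q f" and "q > 0" and "N > 0"
  shows "norm (exp_avg f \<alpha> N) \<le> norm (exp_avg f \<alpha> (q ^ K)) + real (q ^ K) / real N"
proof -
  define Q where "Q = q ^ K"
  define a where "a = N div Q"
  define r where "r = N mod Q"
  have "Q > 0"
    unfolding Q_def using assms(2) by simp
  have N: "N = a * Q + r" and "r \<le> Q" "a * Q \<le> N"
    unfolding a_def r_def using \<open>Q > 0\<close> by simp_all
  have "norm (exp_sum f \<alpha> N) \<le> norm (exp_sum f \<alpha> (a * Q)) + norm (exp_sum f \<alpha> r)"
    using norm_exp_sum_block_split_le[OF assms(1)] \<open>r \<le> Q\<close> unfolding N Q_def by blast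
  also have "\<dots> \<le> real a * norm (exp_sum f \<alpha> Q) + real Q"
    using norm_exp_sum_block_le[OF assms(1)] norm_exp_sum_le[of f \<alpha> r] \<open>r \<le> Q\<close>
      q_multiplicative_norm[OF assms(1)] unfolding Q_def
    by (intro add_mono) (auto simp del: of_nat_power)
  also have "real a * norm (exp_sum f \<alpha> Q) = real (a * Q) * norm (exp_avg f \<alpha> Q)"
    using \<open>Q > 0\<close> by (simp add: exp_avg_eq_exp_sum norm_divide)
  also have "\<dots> \<le> real N * norm (exp_avg f \<alpha> Q)"
    using \<open>a * Q \<le> N\<close> by (intro mult_right_mono) (simp_all del: of_nat_mult)
  finally show ?thesis
    using assms(3) unfolding Q_def by (simp add: exp_avg_eq_exp_sum norm_divide field_simps)
qed

lemma compact_eventually_uniformly_less_antimono: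
  fixes g :: "nat \<Rightarrow> 'a::topological_space \<Rightarrow> real"
  assumes "compact S"
    and cont: "\<And>k. continuous_on S (g k)"
    and antimono: "\<And>x k K. x \<in> S \<Longrightarrow> k \<le> K \<Longrightarrow> g K x \<le> g k x"
    and less: "\<And>x. x \<in> S \<Longrightarrow> \<exists>k. g k x < \<epsilon>"
  shows "\<exists>K. \<forall>x\<in>S. g K x < \<epsilon>"
proof -
  have "\<exists>U. open U \<and> U \<inter> S = g k -` {..<\<epsilon>} \<inter> S" for k
    using cont[of k] open_lessThan unfolding continuous_on_open_invariant by blast
  then obtain U where U: "\<And>k. open (U k)" "\<And>k. U k \<inter> S = g k -` {..<\<epsilon>} \<inter> S"
    by metis
  have "S \<subseteq> (\<Union>k. U k)"
  proof
    fix x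
    assume "x \<in> S"
    then obtain k where "g k x < \<epsilon>"
      using less by blast
    then have "x \<in> U k"
      using U(2)[of k] \<open>x \<in> S\<close> by blast
    then show "x \<in> (\<Union>k. U k)"
      by blast
  qed
  then obtain C where "finite C" and C: "S \<subseteq> (\<Union>k\<in>C. U k)"
    by (metis compactE_image[OF \<open>compact S\<close>, where C = UNIV and f = U] U(1))
  have "g (Max (insert 0 C)) x < \<epsilon>" if "x \<in> S" for x
  proof -
    obtain k where "k \<in> C" "x \<in> U k"
      using C \<open>x \<in> S\<close> by blast
    then have "g k x < \<epsilon>" and "k \<le> Max (insert 0 C)"
      using U(2)[of k] \<open>x \<in> S\<close> \<open>finite C\<close> by auto
    then show ?thesis
      using antimono[OF \<open>x \<in> S\<close>] by fastforce
  qed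
  then show ?thesis
    by blast
qed

lemma exp_avg_power_uniformly_small:
  assumes "q \<ge> 2" and qm: "q_multiplicative q f"
    and lim: "\<And>\<alpha>::real. (\<lambda>N. exp_avg f \<alpha> N) \<longlonglongrightarrow> 0"
    and "\<epsilon> > 0"
  shows "\<exists>K. \<forall>\<alpha>. norm (exp_avg f \<alpha> (q ^ K)) < \<epsilon>"
proof -
  have "strict_mono (\<lambda>k. q ^ k)"
    using assms(1) by (intro strict_monoI power_strict_increasing) auto
  then have "(\<lambda>k. norm (exp_avg f \<alpha> (q ^ k))) \<longlonglongrightarrow> 0" for \<alpha>
    using LIMSEQ_subseq_LIMSEQ[OF lim] tendsto_norm_zero unfolding comp_def by blast
  then have small: "\<exists>k. norm (exp_avg f \<alpha> (q ^ k)) < \<epsilon>" for \<alpha>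
    using order_tendstoD(2)[OF _ \<open>\<epsilon> > 0\<close>] eventually_sequentially by (metis order_refl)
  have "\<exists>K. \<forall>\<alpha>\<in>{0..1}. norm (exp_avg f \<alpha> (q ^ K)) < \<epsilon>"
    using norm_exp_avg_power_antimono[OF qm] assms(1) small
    by (intro compact_eventually_uniformly_less_antimono
        [where g = "\<lambda>k \<alpha>. norm (exp_avg f \<alpha> (q ^ k))"] compact_Icc continuous_on_norm_exp_avg)
      auto
  then obtain K where "\<forall>\<alpha>\<in>{0..1}. norm (exp_avg f \<alpha> (q ^ K)) < \<epsilon>"
    by blast
  then have "norm (exp_avg f (frac \<alpha>) (q ^ K)) < \<epsilon>" for \<alpha>
    using frac_ge_0 frac_lt_1[of \<alpha>] by auto
  then show ?thesis
    unfolding exp_avg_frac by blast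
qed

lemma abs_SUP_norm_le:
  fixes g :: "'a \<Rightarrow> 'b::real_normed_vector"
  assumes "\<And>x. norm (g x) \<le> B"
  shows "\<bar>SUP x. norm (g x)\<bar> \<le> B"
proof -
  have "(SUP x. norm (g x)) \<le> B"
    using assms by (intro cSUP_least) auto
  moreover have "norm (g undefined) \<le> (SUP x. norm (g x))"
    using assms by (intro cSUP_upper bdd_aboveI2) auto
  ultimately show ?thesis
    using norm_ge_zero[of "g undefined"] by linarith
qed

theorem lemma2p3:
  fixes q :: nat and f :: "nat \<Rightarrow> complex"
  assumes "q \<ge> 2"
    and "q_multiplicative q f"
    and "\<And>\<alpha>::real. (\<lambda>N. exp_avg f \<alpha> N) \<longlonglongrightarrow> 0"
  shows "(\<lambda>N. SUP \<alpha>::real. norm (exp_avg f \<alpha> N)) \<longlonglongrightarrow> 0"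
proof (rule LIMSEQ_I)
  fix \<epsilon> :: real
  assume "\<epsilon> > 0"
  then obtain K where K: "\<And>\<alpha>. norm (exp_avg f \<alpha> (q ^ K)) < \<epsilon> / 2"
    using exp_avg_power_uniformly_small[OF assms, of "\<epsilon> / 2"] by auto
  obtain N0 where N0: "\<And>N. N \<ge> N0 \<Longrightarrow> real (q ^ K) / real N < \<epsilon> / 2"
    using order_tendstoD(2)[OF lim_const_over_n[of "real (q ^ K)"], of "\<epsilon> / 2"] \<open>\<epsilon> > 0\<close>
    unfolding eventually_sequentially by auto
  have "\<bar>SUP \<alpha>. norm (exp_avg f \<alpha> N)\<bar> < \<epsilon>" if "N \<ge> max 1 N0" for N
  proof -
    have "norm (exp_avg f \<alpha> N) \<le> \<epsilon> / 2 + real (q ^ K) / real N" for \<alpha>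
      using norm_exp_avg_le_power_avg[OF assms(2), of N \<alpha> K] K[of \<alpha>] assms(1) that by force
    then have "\<bar>SUP \<alpha>. norm (exp_avg f \<alpha> N)\<bar> \<le> \<epsilon> / 2 + real (q ^ K) / real N"
      by (rule abs_SUP_norm_le)
    moreover have "real (q ^ K) / real N < \<epsilon> / 2"
      using N0 that by simp
    ultimately show ?thesis
      by linarith
  qed
  then show "\<exists>N0. \<forall>N\<ge>N0. norm ((SUP \<alpha>. norm (exp_avg f \<alpha> N)) - 0) < \<epsilon>"
    by (intro exI[of _ "max 1 N0"]) simp
qed

end
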